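(* Let $A,B\in S(4,\mathbb{R})$, let $\{v_1,v_2,v_3,v_4\}$ be a symplectic basis for $A$ and $\{w_1,w_2,w_3,w_4\}$ a symplectic basis for $B$. If the basis-values of these two bases are equal, i.e. $(v_1^TJv_2, v_1^TJv_3, v_1^TJv_4, v_2^TJv_3, v_2^TJv_4, v_3^TJv_4) = (w_1^TJw_2, w_1^TJw_3, w_1^TJw_4, w_2^TJw_3, w_2^TJw_4, w_3^TJw_4)$, then there exists $P\in\operatorname{Sp}(4)$ with $A = P^T B P$.
   Context: $S(4,\mathbb{R})$ is the set of invertible skew-symmetric real $4\times4$ matrices; $J = \operatorname{diag}(J_0,J_0)$ with $J_0 = \begin{bmatrix} 0 & 1 \\ -1 & 0\end{bmatrix}$; $\operatorname{Sp}(4) = \{P : P^TJP = J\}$. A basis $\{v_1,v_2,v_3,v_4\}$ of $\mathbb{R}^4$ is a symplectic basis for $A$ if $v_1^TAv_2 = 1$, $v_1^TAv_3 = 0$, $v_1^TAv_4 = 0$, $v_2^TAv_3 = 0$, $v_2^TAv_4 = 0$, $v_3^TAv_4 = 1$. *)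

theory Defs
  imports "HOL-Analysis.Analysis"
begin

text \<open>Real 4x4 matrices are rendered as real^4^4; coordinates are indexed by the
numerals 1,2,3,4 of the finite type 4 (in which 4 = 0, but 1,2,3,4 are distinct).\<close>

definition bform :: "real^4^4 \<Rightarrow> real^4 \<Rightarrow> real^4 \<Rightarrow> real" where
  "bform M x y = x \<bullet> (M *v y)"

definition S4 :: "(real^4^4) set" where
  "S4 = {A. transpose A = - A \<and> invertible A}"

definition Jmat :: "real^4^4" where
  "Jmat = (\<chi> i j. if (i = 1 \<and> j = 2) \<or> (i = 3 \<and> j = 4) then 1
                 else if (i = 2 \<and> j = 1) \<or> (i = 4 \<and> j = 3) then -1 else 0)"

definition Sp4 :: "(real^4^4) set" where
  "Sp4 = {P. transpose P ** Jmat ** P = Jmat}"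

definition is_basis4 :: "real^4 \<Rightarrow> real^4 \<Rightarrow> real^4 \<Rightarrow> real^4 \<Rightarrow> bool" where
  "is_basis4 v1 v2 v3 v4 \<longleftrightarrow> card {v1, v2, v3, v4} = 4 \<and>
     independent {v1, v2, v3, v4} \<and> span {v1, v2, v3, v4} = UNIV"

definition symplectic_basis :: "real^4^4 \<Rightarrow> real^4 \<Rightarrow> real^4 \<Rightarrow> real^4 \<Rightarrow> real^4 \<Rightarrow> bool" where
  "symplectic_basis A v1 v2 v3 v4 \<longleftrightarrow> is_basis4 v1 v2 v3 v4 \<and>
     bform A v1 v2 = 1 \<and> bform A v1 v3 = 0 \<and> bform A v1 v4 = 0 \<and>
     bform A v2 v3 = 0 \<and> bform A v2 v4 = 0 \<and> bform A v3 v4 = 1"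

definition basis_values :: "real^4 \<Rightarrow> real^4 \<Rightarrow> real^4 \<Rightarrow> real^4 \<Rightarrow> real list" where
  "basis_values v1 v2 v3 v4 = [bform Jmat v1 v2, bform Jmat v1 v3, bform Jmat v1 v4,
                               bform Jmat v2 v3, bform Jmat v2 v4, bform Jmat v3 v4]"

end

theory Submission
  imports Defs
begin

text \<open>Stack each basis as the rows of a matrix R. The Gram matrix R M R^T of the bilinear form
of M records the values of the form on the basis, and for skew M it is determined by its six
entries above the diagonal: for A it is therefore J, because the basis is symplectic for A, and for J
it is fixed by the basis values. So, with R' the matrix of the second basis, R A R^T = R' B R'^T
and R J R^T = R' J R'^T. Since R is invertible, both identities say that the single matrix
P = R'^T R^-T carries B to A and J to J by congruence.\<close>

lemma transpose_congruence_skew: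
  fixes A :: "'a::comm_ring_1^'n^'n" and R :: "'a^'n^'m"
  assumes "transpose A = - A"
  shows "transpose (R ** A ** transpose R) = - (R ** A ** transpose R)"
proof -
  have "transpose (R ** A ** transpose R) = R ** (- A) ** transpose R"
    by (simp add: matrix_transpose_mul matrix_mul_assoc assms)
  also have "\<dots> = - (R ** A ** transpose R)"
    by (simp add: vec_eq_iff matrix_matrix_mult_def sum_negf)
  finally show ?thesis .
qed

lemma congruent_via_left_inverse:
  fixes Q R R' M N :: "'a::comm_ring_1^'n^'n"
  assumes "Q ** R = mat 1"
    and "R ** M ** transpose R = R' ** N ** transpose R'"
  shows "M = transpose (transpose R' ** transpose Q) ** N ** (transpose R' ** transpose Q)"
proof -
  have "transpose R ** transpose Q = mat 1"
    by (metis assms(1) matrix_transpose_mul transpose_mat)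
  then have "M = (Q ** R) ** M ** (transpose R ** transpose Q)"
    using assms(1) by simp
  also have "\<dots> = Q ** (R ** M ** transpose R) ** transpose Q"
    by (simp add: matrix_mul_assoc)
  also have "\<dots> = transpose (transpose R' ** transpose Q) ** N ** (transpose R' ** transpose Q)"
    by (simp add: assms(2) matrix_transpose_mul matrix_mul_assoc)
  finally show ?thesis .
qed

lemma gram_matrix_nth:
  fixes R M :: "real^4^4"
  shows "(R ** M ** transpose R) $ i $ j = bform M (R $ i) (R $ j)"
proof -
  have "(R ** M ** transpose R) $ i $ j = (\<Sum>k\<in>UNIV. \<Sum>l\<in>UNIV. R$i$l * M$l$k * R$j$k)"
    by (simp add: matrix_matrix_mult_def transpose_def sum_distrib_right)
  also have "\<dots> = (\<Sum>l\<in>UNIV. \<Sum>k\<in>UNIV. R$i$l * M$l$k * R$j$k)"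
    by (rule sum.swap)
  also have "\<dots> = bform M (R $ i) (R $ j)"
    by (simp add: bform_def inner_vec_def matrix_vector_mult_def sum_distrib_left mult.assoc)
  finally show ?thesis .
qed

definition rows_matrix4 :: "real^4 \<Rightarrow> real^4 \<Rightarrow> real^4 \<Rightarrow> real^4 \<Rightarrow> real^4^4" where
  "rows_matrix4 v1 v2 v3 v4 =
     (\<chi> i. if i = 1 then v1 else if i = 2 then v2 else if i = 3 then v3 else v4)"

lemma rows_matrix4_nth [simp]:
  "rows_matrix4 v1 v2 v3 v4 $ 1 = v1" "rows_matrix4 v1 v2 v3 v4 $ 2 = v2"
  "rows_matrix4 v1 v2 v3 v4 $ 3 = v3" "rows_matrix4 v1 v2 v3 v4 $ 4 = v4"
  unfolding rows_matrix4_def by simp_all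

lemma rows_rows_matrix4: "rows (rows_matrix4 v1 v2 v3 v4) = {v1, v2, v3, v4}"
proof -
  have "rows (rows_matrix4 v1 v2 v3 v4) = range (($) (rows_matrix4 v1 v2 v3 v4))"
    by (auto simp: rows_def row_def vec_nth_inverse)
  then show ?thesis
    by (simp add: UNIV_4)
qed

lemma rows_matrix4_left_invertible:
  assumes "is_basis4 v1 v2 v3 v4"
  shows "\<exists>Q. Q ** rows_matrix4 v1 v2 v3 v4 = mat 1"
  using assms unfolding is_basis4_def
  by (simp add: matrix_left_invertible_span_rows rows_rows_matrix4)

lemma matrix4_eq_iff: "(M::real^4^4) = N \<longleftrightarrow> (\<forall>i j. M $ i $ j = N $ i $ j)"
  by (simp add: vec_eq_iff)

lemma Jmat_nth:
  "Jmat $ 1 $ 1 = 0" "Jmat $ 1 $ 2 = 1" "Jmat $ 1 $ 3 = 0" "Jmat $ 1 $ 4 = 0"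
  "Jmat $ 2 $ 1 = -1" "Jmat $ 2 $ 2 = 0" "Jmat $ 2 $ 3 = 0" "Jmat $ 2 $ 4 = 0"
  "Jmat $ 3 $ 1 = 0" "Jmat $ 3 $ 2 = 0" "Jmat $ 3 $ 3 = 0" "Jmat $ 3 $ 4 = 1"
  "Jmat $ 4 $ 1 = 0" "Jmat $ 4 $ 2 = 0" "Jmat $ 4 $ 3 = -1" "Jmat $ 4 $ 4 = 0"
  unfolding Jmat_def by simp_all

lemma transpose_Jmat: "transpose Jmat = - Jmat"
  unfolding matrix4_eq_iff forall_4 transpose_def by (simp add: Jmat_nth)

lemma skew_matrix4_eqI:
  fixes M N :: "real^4^4"
  assumes "transpose M = - M" and "transpose N = - N"
    and "M $ 1 $ 2 = N $ 1 $ 2" "M $ 1 $ 3 = N $ 1 $ 3" "M $ 1 $ 4 = N $ 1 $ 4"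
    and "M $ 2 $ 3 = N $ 2 $ 3" "M $ 2 $ 4 = N $ 2 $ 4" "M $ 3 $ 4 = N $ 3 $ 4"
  shows "M = N"
proof -
  have M: "M $ j $ i = - M $ i $ j" and N: "N $ j $ i = - N $ i $ j" for i j
    using arg_cong[OF assms(1), of "\<lambda>X. X $ i $ j"] arg_cong[OF assms(2), of "\<lambda>X. X $ i $ j"]
    by (simp_all add: transpose_def)
  have "M $ i $ i = 0" "N $ i $ i = 0" for i
    using M[of i i] N[of i i] by linarith+
  with assms(3-) M[of 2 1] M[of 3 1] M[of 4 1] M[of 3 2] M[of 4 2] M[of 4 3]
    N[of 2 1] N[of 3 1] N[of 4 1] N[of 3 2] N[of 4 2] N[of 4 3]
  show ?thesis
    unfolding matrix4_eq_iff forall_4 by simp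
qed

lemma gram_matrix_symplectic_basis:
  assumes "transpose A = - A" and "symplectic_basis A v1 v2 v3 v4"
  shows "rows_matrix4 v1 v2 v3 v4 ** A ** transpose (rows_matrix4 v1 v2 v3 v4) = Jmat"
  by (rule skew_matrix4_eqI) (use assms(2) transpose_congruence_skew[OF assms(1)] in
    \<open>simp_all add: transpose_Jmat symplectic_basis_def gram_matrix_nth Jmat_nth\<close>)

lemma gram_matrix_Jmat_eq:
  assumes "basis_values v1 v2 v3 v4 = basis_values w1 w2 w3 w4"
  shows "rows_matrix4 v1 v2 v3 v4 ** Jmat ** transpose (rows_matrix4 v1 v2 v3 v4) =
         rows_matrix4 w1 w2 w3 w4 ** Jmat ** transpose (rows_matrix4 w1 w2 w3 w4)"
  by (rule skew_matrix4_eqI) (use assms transpose_congruence_skew[OF transpose_Jmat] in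
    \<open>simp_all add: basis_values_def gram_matrix_nth\<close>)

theorem mainTheorem10:
  fixes A B :: "real^4^4" and v1 v2 v3 v4 w1 w2 w3 w4 :: "real^4"
  assumes "A \<in> S4" and "B \<in> S4"
    and "symplectic_basis A v1 v2 v3 v4"
    and "symplectic_basis B w1 w2 w3 w4"
    and "basis_values v1 v2 v3 v4 = basis_values w1 w2 w3 w4"
  shows "\<exists>P \<in> Sp4. A = transpose P ** B ** P"
proof -
  define R where "R = rows_matrix4 v1 v2 v3 v4"
  define R' where "R' = rows_matrix4 w1 w2 w3 w4"
  have skew: "transpose A = - A" "transpose B = - B"
    using assms(1,2) by (simp_all add: S4_def)
  have gram_A_B: "R ** A ** transpose R = R' ** B ** transpose R'"
    using gram_matrix_symplectic_basis[OF skew(1) assms(3)]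
      gram_matrix_symplectic_basis[OF skew(2) assms(4)]
    unfolding R_def R'_def by simp
  have gram_J: "R ** Jmat ** transpose R = R' ** Jmat ** transpose R'"
    using gram_matrix_Jmat_eq[OF assms(5)] unfolding R_def R'_def .
  obtain Q where Q: "Q ** R = mat 1"
    using rows_matrix4_left_invertible assms(3) unfolding symplectic_basis_def R_def by blast
  define P where "P = transpose R' ** transpose Q"
  have "A = transpose P ** B ** P"
    unfolding P_def by (rule congruent_via_left_inverse[OF Q gram_A_B])
  moreover have "P \<in> Sp4"
    unfolding Sp4_def P_def using congruent_via_left_inverse[OF Q gram_J] by simp
  ultimately show ?thesis
    by blast
qed

end
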